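(* Let $(T_n)$ be a sequence of tournaments with $|T_n|\to\infty$ such that $c_3=\lim\mathbf{pr}(C_3,T_n)$ and $c_4=\lim\mathbf{pr}(C_4,T_n)$ exist. If $c_3\ge\frac1{16}$ then $c_4\ge\frac3{64}$. In particular, the balanced random blow-up of the transitive tournament $T_2$ (which has $c_3=\frac1{16}$ and $c_4=\frac3{64}$) minimizes $c_4$ among all such sequences with $c_3=\frac1{16}$.
   Context: For tournaments $T,H$, $\mathbf{pr}(H,T)$ denotes the probability that a uniformly random set of $|H|$ vertices of $T$ spans a subtournament isomorphic to $H$. $C_3$ is the cyclically oriented triangle, $C_4$ is the $4$-vertex tournament containing a directed Hamiltonian $4$-cycle, and $T_m$ is the transitive $m$-vertex tournament. The balanced random blow-up of a $k$-vertex tournament $H$ is the sequence whose $n$-th member has vertex set $V_1\sqcup\dots\sqcup V_k$ with $|V_i|=\lfloor n/k\rfloor$, all edges directed from $V_i$ to $V_j$ whenever $i\to j$ in $H$, and a uniformly random tournament on each $V_i$ (limits taken almost surely). *)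

theory Defs
  imports Complex_Main
begin

definition tournament :: "nat \<Rightarrow> (nat \<Rightarrow> nat \<Rightarrow> bool) \<Rightarrow> bool" where
  "tournament n T \<longleftrightarrow>
     (\<forall>u<n. \<not> T u u) \<and>
     (\<forall>u<n. \<forall>v<n. u \<noteq> v \<longrightarrow> (T u v \<longleftrightarrow> \<not> T v u))"

definition spans_iso :: "nat \<Rightarrow> (nat \<Rightarrow> nat \<Rightarrow> bool) \<Rightarrow> (nat \<Rightarrow> nat \<Rightarrow> bool) \<Rightarrow> nat set \<Rightarrow> bool" where
  "spans_iso k H T S \<longleftrightarrow>
     (\<exists>f. bij_betw f {0..<k} S \<and> (\<forall>i<k. \<forall>j<k. H i j \<longleftrightarrow> T (f i) (f j)))"

definition pr :: "nat \<Rightarrow> (nat \<Rightarrow> nat \<Rightarrow> bool) \<Rightarrow> nat \<Rightarrow> (nat \<Rightarrow> nat \<Rightarrow> bool) \<Rightarrow> real" where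
  "pr k H n T =
     real (card {S. S \<subseteq> {0..<n} \<and> card S = k \<and> spans_iso k H T S}) / real (n choose k)"

definition C3 :: "nat \<Rightarrow> nat \<Rightarrow> bool" where
  "C3 i j \<longleftrightarrow> i < 3 \<and> j < 3 \<and> j = (i + 1) mod 3"

text \<open>The 4-vertex tournament with a directed Hamiltonian cycle 0 -> 1 -> 2 -> 3 -> 0
  (unique up to isomorphism), with diagonals 0 -> 2 and 1 -> 3.\<close>
definition C4 :: "nat \<Rightarrow> nat \<Rightarrow> bool" where
  "C4 i j \<longleftrightarrow> (i, j) \<in> {(0,1), (1,2), (2,3), (3,0), (0,2), (1,3)}"

end

theory Submission
  imports Defs "HOL-Combinatorics.Multiset_Permutations"
begin

text \<open>
  For an arc \<open>u \<rightarrow> v\<close> of a tournament, weight every other vertex \<open>w\<close> by \<open>1\<close> if \<open>w\<close>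
  beats both or loses to both ends, by \<open>-1\<close> if \<open>u \<rightarrow> w \<rightarrow> v\<close>, and by \<open>-5\<close> if \<open>w\<close> closes a
  cyclic triangle with the arc. Summing the products of the weights of two distinct vertices
  gives \<open>(\<Sum> weights)\<^sup>2 - \<Sum> weights\<^sup>2 \<ge> -25 n\<close>, so the total over all arcs is at least
  \<open>-25 n\<^sup>3\<close>. On the other hand, summing each product over the 24 orderings of its four
  vertices yields \<open>128 [the 4-set spans C\<^sub>4] - 40 (number of cyclic triangles in it) + 4\<close>.
  After normalisation this is the flag-algebra inequality
  \<open>128 c\<^sub>4 - 160 c\<^sub>3 + 4 \<ge> -O(1/n)\<close>, and \<open>c\<^sub>3 \<ge> 1/16\<close> gives \<open>c\<^sub>4 \<ge> 3/64\<close>.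
\<close>

type_synonym fun4 = "nat \<Rightarrow> nat \<Rightarrow> nat \<Rightarrow> nat \<Rightarrow> real"

definition sum4 :: "nat \<Rightarrow> fun4 \<Rightarrow> real" where
  "sum4 n f = (\<Sum>p<n. \<Sum>q<n. \<Sum>r<n. \<Sum>s<n. f p q r s)"

definition sum3 :: "nat \<Rightarrow> (nat \<Rightarrow> nat \<Rightarrow> nat \<Rightarrow> real) \<Rightarrow> real" where
  "sum3 n f = (\<Sum>p<n. \<Sum>q<n. \<Sum>r<n. f p q r)"

lemma sum4_cartesian:
  "sum4 n f = (\<Sum>(p, q, r, s) \<in> {..<n} \<times> {..<n} \<times> {..<n} \<times> {..<n}. f p q r s)"
  unfolding sum4_def by (simp add: sum.cartesian_product)

lemma sum3_cartesian: "sum3 n f = (\<Sum>(p, q, r) \<in> {..<n} \<times> {..<n} \<times> {..<n}. f p q r)"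
  unfolding sum3_def by (simp add: sum.cartesian_product)

lemma sum4_swap12: "sum4 n f = sum4 n (\<lambda>p q r s. f q p r s)"
  unfolding sum4_cartesian
  by (rule sum.reindex_bij_witness[where i="\<lambda>(p,q,r,s). (q,p,r,s)" and j="\<lambda>(p,q,r,s). (q,p,r,s)"]) auto

lemma sum4_swap13: "sum4 n f = sum4 n (\<lambda>p q r s. f r q p s)"
  unfolding sum4_cartesian
  by (rule sum.reindex_bij_witness[where i="\<lambda>(p,q,r,s). (r,q,p,s)" and j="\<lambda>(p,q,r,s). (r,q,p,s)"]) auto

lemma sum4_swap14: "sum4 n f = sum4 n (\<lambda>p q r s. f s q r p)"
  unfolding sum4_cartesian
  by (rule sum.reindex_bij_witness[where i="\<lambda>(p,q,r,s). (s,q,r,p)" and j="\<lambda>(p,q,r,s). (s,q,r,p)"]) auto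

lemma sum4_swap23: "sum4 n f = sum4 n (\<lambda>p q r s. f p r q s)"
  unfolding sum4_cartesian
  by (rule sum.reindex_bij_witness[where i="\<lambda>(p,q,r,s). (p,r,q,s)" and j="\<lambda>(p,q,r,s). (p,r,q,s)"]) auto

lemma sum4_swap24: "sum4 n f = sum4 n (\<lambda>p q r s. f p s r q)"
  unfolding sum4_cartesian
  by (rule sum.reindex_bij_witness[where i="\<lambda>(p,q,r,s). (p,s,r,q)" and j="\<lambda>(p,q,r,s). (p,s,r,q)"]) auto

lemma sum4_swap34: "sum4 n f = sum4 n (\<lambda>p q r s. f p q s r)"
  unfolding sum4_cartesian
  by (rule sum.reindex_bij_witness[where i="\<lambda>(p,q,r,s). (p,q,s,r)" and j="\<lambda>(p,q,r,s). (p,q,s,r)"]) auto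

lemma sum4_add: "sum4 n (\<lambda>p q r s. f p q r s + g p q r s) = sum4 n f + sum4 n g"
  unfolding sum4_def by (simp add: sum.distrib)

lemma sum4_diff: "sum4 n (\<lambda>p q r s. f p q r s - g p q r s) = sum4 n f - sum4 n g"
  unfolding sum4_def by (simp add: sum_subtractf)

lemma sum4_mult: "sum4 n (\<lambda>p q r s. c * f p q r s) = c * sum4 n f"
  unfolding sum4_def by (simp add: sum_distrib_left)

lemma sum4_cong:
  "(\<And>p q r s. p < n \<Longrightarrow> q < n \<Longrightarrow> r < n \<Longrightarrow> s < n \<Longrightarrow> f p q r s = g p q r s)
     \<Longrightarrow> sum4 n f = sum4 n g"
  unfolding sum4_def by (intro sum.cong) auto

lemma sum4_mono:
  "(\<And>p q r s. p < n \<Longrightarrow> q < n \<Longrightarrow> r < n \<Longrightarrow> s < n \<Longrightarrow> f p q r s \<le> g p q r s)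
     \<Longrightarrow> sum4 n f \<le> sum4 n g"
  unfolding sum4_def by (intro sum_mono) auto

lemma sum3_mono:
  "(\<And>p q r. p < n \<Longrightarrow> q < n \<Longrightarrow> r < n \<Longrightarrow> f p q r \<le> g p q r) \<Longrightarrow> sum3 n f \<le> sum3 n g"
  unfolding sum3_def by (intro sum_mono) auto

text \<open>Each \<open>sym\<^sub>k\<close> sums over coset representatives of \<open>S\<^sub>k\<^sub>-\<^sub>1\<close> in \<open>S\<^sub>k\<close>,
  so \<open>symmetrize f\<close> is the sum of \<open>f\<close> over all 24 permutations of its arguments.\<close>

definition sym2 :: "fun4 \<Rightarrow> fun4" where
  "sym2 f p q r s = f p q r s + f q p r s"

definition sym3 :: "fun4 \<Rightarrow> fun4" where
  "sym3 f p q r s = f p q r s + f r q p s + f p r q s"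

definition sym4 :: "fun4 \<Rightarrow> fun4" where
  "sym4 f p q r s = f p q r s + f s q r p + f p s r q + f p q s r"

definition symmetrize :: "fun4 \<Rightarrow> fun4" where
  "symmetrize f = sym4 (sym3 (sym2 f))"

lemma sum4_sym2: "sum4 n (sym2 f) = 2 * sum4 n f"
  using sum4_add[of n f "\<lambda>p q r s. f q p r s"] sum4_swap12[of n f]
  by (simp add: sym2_def[abs_def])

lemma sum4_sym3: "sum4 n (sym3 f) = 3 * sum4 n f"
  using sum4_add[of n "\<lambda>p q r s. f p q r s + f r q p s" "\<lambda>p q r s. f p r q s"]
    sum4_add[of n f "\<lambda>p q r s. f r q p s"] sum4_swap13[of n f] sum4_swap23[of n f]
  by (simp add: sym3_def[abs_def])

lemma sum4_sym4: "sum4 n (sym4 f) = 4 * sum4 n f"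
  using sum4_add[of n "\<lambda>p q r s. f p q r s + f s q r p + f p s r q" "\<lambda>p q r s. f p q s r"]
    sum4_add[of n "\<lambda>p q r s. f p q r s + f s q r p" "\<lambda>p q r s. f p s r q"]
    sum4_add[of n f "\<lambda>p q r s. f s q r p"]
    sum4_swap14[of n f] sum4_swap24[of n f] sum4_swap34[of n f]
  by (simp add: sym4_def[abs_def])

lemma sum4_symmetrize: "sum4 n (symmetrize f) = 24 * sum4 n f"
  by (simp add: symmetrize_def sum4_sym2 sum4_sym3 sum4_sym4)


lemma list_eq_nth4: "length xs = 4 \<Longrightarrow> xs = [xs!0, xs!1, xs!2, xs!3]"
  by (cases xs; cases "tl xs"; cases "tl (tl xs)"; cases "tl (tl (tl xs))") auto

lemma list_eq_nth3: "length xs = 3 \<Longrightarrow> xs = [xs!0, xs!1, xs!2]"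
  by (cases xs; cases "tl xs"; cases "tl (tl xs)") auto

lemma sum4_indicator:
  "sum4 n (\<lambda>p q r s. of_bool (P p q r s)) =
     real (card {xs. length xs = 4 \<and> set xs \<subseteq> {..<n} \<and> P (xs!0) (xs!1) (xs!2) (xs!3)})"
    (is "_ = real (card ?L)")
proof -
  let ?A = "{t \<in> {..<n} \<times> {..<n} \<times> {..<n} \<times> {..<n}. case t of (p, q, r, s) \<Rightarrow> P p q r s}"
  have "bij_betw (\<lambda>(p, q, r, s). [p, q, r, s]) ?A ?L"
    by (rule bij_betwI[where g="\<lambda>xs. (xs!0, xs!1, xs!2, xs!3)"])
      (auto simp: subset_iff dest: list_eq_nth4[symmetric])
  then have "card ?A = card ?L"
    by (rule bij_betw_same_card)
  moreover have "sum4 n (\<lambda>p q r s. of_bool (P p q r s)) = real (card ?A)"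
    unfolding sum4_cartesian by (simp add: of_bool_def sum.If_cases case_prod_beta Int_def)
  ultimately show ?thesis
    by simp
qed

lemma sum3_indicator:
  "sum3 n (\<lambda>p q r. of_bool (P p q r)) =
     real (card {xs. length xs = 3 \<and> set xs \<subseteq> {..<n} \<and> P (xs!0) (xs!1) (xs!2)})"
    (is "_ = real (card ?L)")
proof -
  let ?A = "{t \<in> {..<n} \<times> {..<n} \<times> {..<n}. case t of (p, q, r) \<Rightarrow> P p q r}"
  have "bij_betw (\<lambda>(p, q, r). [p, q, r]) ?A ?L"
    by (rule bij_betwI[where g="\<lambda>xs. (xs!0, xs!1, xs!2)"])
      (auto simp: subset_iff dest: list_eq_nth3[symmetric])
  then have "card ?A = card ?L"
    by (rule bij_betw_same_card)
  moreover have "sum3 n (\<lambda>p q r. of_bool (P p q r)) = real (card ?A)"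
    unfolding sum3_cartesian by (simp add: of_bool_def sum.If_cases case_prod_beta Int_def)
  ultimately show ?thesis
    by simp
qed

lemma card_distinct_lists_set_in:
  assumes "finite V" "A \<subseteq> {S. S \<subseteq> V \<and> card S = k}"
  shows "card {xs. distinct xs \<and> set xs \<in> A} = fact k * card A"
proof -
  have "A \<subseteq> Pow V"
    using assms(2) by auto
  then have "finite A"
    using assms(1) by (simp add: finite_subset)
  have "{xs. distinct xs \<and> set xs \<in> A} = (\<Union>S\<in>A. permutations_of_set S)"
    unfolding permutations_of_set_def by auto
  also have "card \<dots> = (\<Sum>S\<in>A. card (permutations_of_set S))"
    using \<open>finite A\<close> by (intro card_UN_disjoint) (simp_all, auto simp: permutations_of_set_def)
  also have "\<dots> = (\<Sum>S\<in>A. fact k)"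
  proof (intro sum.cong refl)
    fix S assume "S \<in> A"
    with assms have "finite S" "card S = k" by (auto dest: finite_subset)
    then show "card (permutations_of_set S) = fact k" by simp
  qed
  finally show ?thesis by simp
qed

lemma sum4_distinct_family:
  assumes "A \<subseteq> {S. S \<subseteq> {..<n} \<and> card S = 4}"
  shows "sum4 n (\<lambda>p q r s. of_bool (distinct [p, q, r, s] \<and> {p, q, r, s} \<in> A)) = 24 * real (card A)"
proof -
  have "{xs. length xs = 4 \<and> set xs \<subseteq> {..<n} \<and>
           distinct [xs!0, xs!1, xs!2, xs!3] \<and> {xs!0, xs!1, xs!2, xs!3} \<in> A}
        = {xs. distinct xs \<and> set xs \<in> A}"
  proof (intro set_eqI iffI; clarify)
    fix xs assume "distinct xs" "set xs \<in> A"
    then have "length xs = 4" using assms distinct_card by fastforce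
    with \<open>distinct xs\<close> \<open>set xs \<in> A\<close> assms show
      "length xs = 4 \<and> set xs \<subseteq> {..<n} \<and>
         distinct [xs!0, xs!1, xs!2, xs!3] \<and> {xs!0, xs!1, xs!2, xs!3} \<in> A"
      by (metis (no_types, lifting) list_eq_nth4 empty_set list.simps(15) mem_Collect_eq subsetD)
  qed (metis empty_set list.simps(15) list_eq_nth4)
  with sum4_indicator card_distinct_lists_set_in[OF _ assms] show ?thesis
    by (simp add: fact_numeral)
qed

lemma sum3_distinct_family:
  assumes "A \<subseteq> {S. S \<subseteq> {..<n} \<and> card S = 3}"
  shows "sum3 n (\<lambda>p q r. of_bool (distinct [p, q, r] \<and> {p, q, r} \<in> A)) = 6 * real (card A)"
proof -
  have "{xs. length xs = 3 \<and> set xs \<subseteq> {..<n} \<and>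
           distinct [xs!0, xs!1, xs!2] \<and> {xs!0, xs!1, xs!2} \<in> A}
        = {xs. distinct xs \<and> set xs \<in> A}"
  proof (intro set_eqI iffI; clarify)
    fix xs assume "distinct xs" "set xs \<in> A"
    then have "length xs = 3" using assms distinct_card by fastforce
    with \<open>distinct xs\<close> \<open>set xs \<in> A\<close> assms show
      "length xs = 3 \<and> set xs \<subseteq> {..<n} \<and> distinct [xs!0, xs!1, xs!2] \<and> {xs!0, xs!1, xs!2} \<in> A"
      by (metis (no_types, lifting) list_eq_nth3 empty_set list.simps(15) mem_Collect_eq subsetD)
  qed (metis empty_set list.simps(15) list_eq_nth3)
  with sum3_indicator card_distinct_lists_set_in[OF _ assms] show ?thesis
    by (simp add: fact_numeral)
qed

lemma sum4_distinct_drop_last: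
  "sum4 n (\<lambda>p q r s. of_bool (distinct [p, q, r, s]) * g p q r)
     = real (n - 3) * sum3 n (\<lambda>p q r. of_bool (distinct [p, q, r]) * g p q r)"
  unfolding sum4_def sum3_def sum_distrib_left
proof (intro sum.cong refl)
  fix p q r assume "p \<in> {..<n}" "q \<in> {..<n}" "r \<in> {..<n}"
  then have "card ({..<n} - {p, q, r}) = n - 3" if "distinct [p, q, r]"
    using that by (subst card_Diff_subset) auto
  moreover have "(\<Sum>s<n. of_bool (distinct [p, q, r, s]) * g p q r)
      = (\<Sum>s\<in>{..<n} - {p, q, r}. of_bool (distinct [p, q, r]) * g p q r)"
    by (intro sum.mono_neutral_cong_right) auto
  ultimately show "(\<Sum>s<n. of_bool (distinct [p, q, r, s]) * g p q r)
      = real (n - 3) * (of_bool (distinct [p, q, r]) * g p q r)"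
    by (cases "distinct [p, q, r]") auto
qed

lemma sum4_distinct: "sum4 n (\<lambda>p q r s. of_bool (distinct [p, q, r, s])) = 24 * real (n choose 4)"
proof -
  let ?all = "{S. S \<subseteq> {..<n} \<and> card S = 4}"
  have "sum4 n (\<lambda>p q r s. of_bool (distinct [p, q, r, s]))
      = sum4 n (\<lambda>p q r s. of_bool (distinct [p, q, r, s] \<and> {p, q, r, s} \<in> ?all))"
    by (intro sum4_cong) (auto simp: card_insert_if)
  with sum4_distinct_family[of ?all n] show ?thesis
    by (simp add: n_subsets)
qed

lemma sum3_distinct: "sum3 n (\<lambda>p q r. of_bool (distinct [p, q, r])) = 6 * real (n choose 3)"
proof -
  let ?all = "{S. S \<subseteq> {..<n} \<and> card S = 3}"
  have "sum3 n (\<lambda>p q r. of_bool (distinct [p, q, r]))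
      = sum3 n (\<lambda>p q r. of_bool (distinct [p, q, r] \<and> {p, q, r} \<in> ?all))"
    unfolding sum3_def by (intro sum.cong) (auto simp: card_insert_if)
  with sum3_distinct_family[of ?all n] show ?thesis
    by (simp add: n_subsets)
qed

lemma choose_3_mult_eq_choose_4: "real (n - 3) * real (n choose 3) = 4 * real (n choose 4)"
  using sum4_distinct_drop_last[of n "\<lambda>_ _ _. 1"] sum4_distinct[of n] sum3_distinct[of n]
  by (simp add: mult.commute)

definition cyclic :: "(nat \<Rightarrow> nat \<Rightarrow> bool) \<Rightarrow> nat \<Rightarrow> nat \<Rightarrow> nat \<Rightarrow> bool" where
  "cyclic T x y z \<longleftrightarrow> (T x y \<and> T y z \<and> T z x) \<or> (T y x \<and> T z y \<and> T x z)"

definition cyclic_triangles :: "(nat \<Rightarrow> nat \<Rightarrow> bool) \<Rightarrow> fun4" where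
  "cyclic_triangles T p q r s =
     of_bool (cyclic T p q r) + of_bool (cyclic T p q s) + of_bool (cyclic T p r s)
       + of_bool (cyclic T q r s)"

definition arc_weight :: "(nat \<Rightarrow> nat \<Rightarrow> bool) \<Rightarrow> nat \<Rightarrow> nat \<Rightarrow> nat \<Rightarrow> real" where
  "arc_weight T u v w = (if T w u \<longleftrightarrow> T w v then 1 else if T u w \<and> T w v then -1 else -5)"

definition sos_term :: "(nat \<Rightarrow> nat \<Rightarrow> bool) \<Rightarrow> fun4" where
  "sos_term T p q r s =
     (if distinct [p, q, r, s] \<and> T p q then arc_weight T p q r * arc_weight T p q s else 0)"

definition copies :: "nat \<Rightarrow> (nat \<Rightarrow> nat \<Rightarrow> bool) \<Rightarrow> nat \<Rightarrow> (nat \<Rightarrow> nat \<Rightarrow> bool) \<Rightarrow> nat" where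
  "copies k H n T = card {S. S \<subseteq> {0..<n} \<and> card S = k \<and> spans_iso k H T S}"

lemma pr_eq_copies: "pr k H n T = real (copies k H n T) / real (n choose k)"
  unfolding pr_def copies_def ..

lemma tournament_converse:
  "tournament n T \<Longrightarrow> u < n \<Longrightarrow> v < n \<Longrightarrow> u \<noteq> v \<Longrightarrow> T v u \<longleftrightarrow> \<not> T u v"
  unfolding tournament_def by blast

lemma tournament_converse4:
  assumes "tournament n T" "p < n" "q < n" "r < n" "s < n" "distinct [p, q, r, s]"
  shows "T q p \<longleftrightarrow> \<not> T p q" "T r p \<longleftrightarrow> \<not> T p r" "T s p \<longleftrightarrow> \<not> T p s"
    "T r q \<longleftrightarrow> \<not> T q r" "T s q \<longleftrightarrow> \<not> T q s" "T s r \<longleftrightarrow> \<not> T r s"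
proof -
  have "p \<noteq> q" "p \<noteq> r" "p \<noteq> s" "q \<noteq> r" "q \<noteq> s" "r \<noteq> s"
    using assms(6) by auto
  with assms(1-5) show "T q p \<longleftrightarrow> \<not> T p q" "T r p \<longleftrightarrow> \<not> T p r" "T s p \<longleftrightarrow> \<not> T p s"
    "T r q \<longleftrightarrow> \<not> T q r" "T s q \<longleftrightarrow> \<not> T q s" "T s r \<longleftrightarrow> \<not> T r s"
    by (metis tournament_converse)+
qed

lemma symmetrize_sos_term_distinct:
  assumes "distinct [p, q, r, s]"
    and t: "T q p \<longleftrightarrow> \<not> T p q" "T r p \<longleftrightarrow> \<not> T p r" "T s p \<longleftrightarrow> \<not> T p s"
      "T r q \<longleftrightarrow> \<not> T q r" "T s q \<longleftrightarrow> \<not> T q s" "T s r \<longleftrightarrow> \<not> T r s"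
  shows "symmetrize (sos_term T) p q r s
           = 128 * of_bool (cyclic_triangles T p q r s = 2) - 40 * cyclic_triangles T p q r s + 4"
proof -
  have d: "p \<noteq> q" "p \<noteq> r" "p \<noteq> s" "q \<noteq> r" "q \<noteq> s" "r \<noteq> s"
    using assms(1) by auto
  \<comment> \<open>Once every arc is expressed through \<open>T p q\<close>, ..., \<open>T r s\<close>, this is a check over the
    64 tournaments on \<open>{p, q, r, s}\<close>.\<close>
  show ?thesis
    unfolding symmetrize_def sym4_def sym3_def sym2_def sos_term_def arc_weight_def
      cyclic_triangles_def cyclic_def
    apply (simp only: distinct.simps list.set insert_iff empty_iff d d[symmetric] t simp_thms)
    by (cases "T p q"; cases "T p r"; cases "T p s"; cases "T q r"; cases "T q s"; cases "T r s";
        simp)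
qed

lemma symmetrize_sos_term:
  assumes "tournament n T" "p < n" "q < n" "r < n" "s < n"
  shows "symmetrize (sos_term T) p q r s = of_bool (distinct [p, q, r, s])
           * (128 * of_bool (cyclic_triangles T p q r s = 2) - 40 * cyclic_triangles T p q r s + 4)"
proof (cases "distinct [p, q, r, s]")
  case True
  with assms symmetrize_sos_term_distinct[OF True tournament_converse4[OF assms]] show ?thesis
    by simp
next
  case False
  then have "p = q \<or> p = r \<or> p = s \<or> q = r \<or> q = s \<or> r = s"
    by auto
  then show ?thesis
    by (elim disjE) (simp_all add: symmetrize_def sym4_def sym3_def sym2_def sos_term_def)
qed

lemma square_sum_eq_sum_squares_plus_offdiag:
  fixes a :: "nat \<Rightarrow> real"
  shows "(\<Sum>r<n. a r)\<^sup>2 = (\<Sum>r<n. (a r)\<^sup>2) + (\<Sum>r<n. \<Sum>s<n. if r \<noteq> s then a r * a s else 0)"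
proof -
  have "(\<Sum>s<n. a r * a s) = (a r)\<^sup>2 + (\<Sum>s<n. if r \<noteq> s then a r * a s else 0)" if "r < n" for r
  proof -
    have "(\<Sum>s<n. a r * a s)
        = (\<Sum>s<n. (if r = s then a r * a s else 0) + (if r \<noteq> s then a r * a s else 0))"
      by (intro sum.cong) auto
    with that show ?thesis by (simp add: sum.distrib power2_eq_square)
  qed
  then show ?thesis
    by (simp add: power2_eq_square sum_product sum.distrib)
qed

lemma sum4_sos_term_ge: "- 25 * real n ^ 3 \<le> sum4 n (sos_term T)"
proof -
  have arc: "- 25 * real n \<le> (\<Sum>r<n. \<Sum>s<n. sos_term T p q r s)" for p q
  proof (cases "p \<noteq> q \<and> T p q")
    case True
    define a where "a r = (if r \<noteq> p \<and> r \<noteq> q then arc_weight T p q r else 0)" for r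
    have "(\<Sum>r<n. \<Sum>s<n. sos_term T p q r s)
        = (\<Sum>r<n. \<Sum>s<n. if r \<noteq> s then a r * a s else 0)"
      unfolding sos_term_def a_def using True by (intro sum.cong refl) auto
    also have "\<dots> = (\<Sum>r<n. a r)\<^sup>2 - (\<Sum>r<n. (a r)\<^sup>2)"
      using square_sum_eq_sum_squares_plus_offdiag[of a n] by simp
    also have "\<dots> \<ge> 0 - (\<Sum>r<n. 25)"
      by (intro diff_mono sum_mono) (auto simp: a_def arc_weight_def)
    finally show ?thesis by simp
  next
    case False
    then show ?thesis by (auto simp: sos_term_def)
  qed
  have "(\<Sum>p<n. \<Sum>q<n. - 25 * real n) \<le> sum4 n (sos_term T)"
    unfolding sum4_def by (intro sum_mono arc)
  then show ?thesis by (simp add: power3_eq_cube)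
qed

lemma spans_C3_imp_cyclic:
  assumes "spans_iso 3 C3 T {a, b, c}" "distinct [a, b, c]"
  shows "cyclic T a b c"
proof -
  obtain f where bij: "bij_betw f {0..<3} {a, b, c}"
    and iso: "\<forall>i<3. \<forall>j<3. C3 i j \<longleftrightarrow> T (f i) (f j)"
    using assms(1) unfolding spans_iso_def by blast
  have "{0..<3::nat} = {0, 1, 2}"
    by auto
  with bij have "a \<in> {f 0, f 1, f 2}" "b \<in> {f 0, f 1, f 2}" "c \<in> {f 0, f 1, f 2}"
    unfolding bij_betw_def by auto
  moreover have "T (f 0) (f 1)" "T (f 1) (f 2)" "T (f 2) (f 0)"
    using iso[rule_format, of 0 1] iso[rule_format, of 1 2] iso[rule_format, of 2 0]
    unfolding C3_def by auto
  ultimately show ?thesis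
    using assms(2) unfolding cyclic_def by auto
qed

lemma cyclic_sym:
  "cyclic T p r q = cyclic T p q r" "cyclic T q p r = cyclic T p q r" "cyclic T q r p = cyclic T p q r"
  "cyclic T r p q = cyclic T p q r" "cyclic T r q p = cyclic T p q r"
  unfolding cyclic_def by auto

lemma sum4_cyclic_triangles:
  "sum4 n (\<lambda>p q r s. of_bool (distinct [p, q, r, s]) * cyclic_triangles T p q r s)
     = 4 * real (n - 3) * sum3 n (\<lambda>p q r. of_bool (distinct [p, q, r]) * of_bool (cyclic T p q r))"
proof -
  define h :: fun4 where "h p q r s = of_bool (distinct [p, q, r, s]) * of_bool (cyclic T p q r)" for p q r s
  have "sum4 n (\<lambda>p q r s. of_bool (distinct [p, q, r, s]) * cyclic_triangles T p q r s)
      = sum4 n h + sum4 n (\<lambda>p q r s. h p q s r) + sum4 n (\<lambda>p q r s. h p s r q)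
        + sum4 n (\<lambda>p q r s. h s q r p)"
    unfolding sum4_add[symmetric] h_def cyclic_triangles_def
    by (intro sum4_cong) (auto simp: cyclic_sym algebra_simps)
  also have "\<dots> = 4 * sum4 n h"
    using sum4_swap34[of n h] sum4_swap24[of n h] sum4_swap14[of n h] by simp
  also have "sum4 n h
      = real (n - 3) * sum3 n (\<lambda>p q r. of_bool (distinct [p, q, r]) * of_bool (cyclic T p q r))"
    unfolding h_def by (rule sum4_distinct_drop_last)
  finally show ?thesis by simp
qed

definition C4_pattern :: "(nat \<Rightarrow> nat \<Rightarrow> bool) \<Rightarrow> nat \<Rightarrow> nat \<Rightarrow> nat \<Rightarrow> nat \<Rightarrow> bool" where
  "C4_pattern T a b c d \<longleftrightarrow> T a b \<and> T b c \<and> T c d \<and> T d a \<and> T a c \<and> T b d"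

lemma all_less_4_iff: "(\<forall>i<4. P i) \<longleftrightarrow> P (0::nat) \<and> P 1 \<and> P 2 \<and> P 3"
  by (auto simp: less_Suc_eq numeral_eq_Suc)

lemma C4_pattern_spans:
  assumes "tournament n T" "a < n" "b < n" "c < n" "d < n" "C4_pattern T a b c d"
  shows "spans_iso 4 C4 T {a, b, c, d}"
proof -
  have irrefl: "\<not> T a a" "\<not> T b b" "\<not> T c c" "\<not> T d d"
    using assms(1-5) unfolding tournament_def by auto
  then have distinct: "distinct [a, b, c, d]"
    using assms(6) unfolding C4_pattern_def by auto
  then have converse: "\<not> T b a" "\<not> T c b" "\<not> T d c" "\<not> T a d" "\<not> T c a" "\<not> T d b"
    using assms unfolding C4_pattern_def by (auto dest: tournament_converse)
  define f where "f i = (if i = 0 then a else if i = 1 then b else if i = 2 then c else d)" for i :: nat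
  have U: "{0..<4::nat} = {0, 1, 2, 3}"
    by auto
  have "bij_betw f {0..<4} {a, b, c, d}"
    unfolding bij_betw_def U inj_on_def f_def using distinct by auto
  moreover have "\<forall>i<4. \<forall>j<4. C4 i j \<longleftrightarrow> T (f i) (f j)"
    unfolding f_def C4_def all_less_4_iff
    using assms(6) irrefl converse unfolding C4_pattern_def by simp
  ultimately show ?thesis
    unfolding spans_iso_def by blast
qed

lemma cyclic_triangles_eq_2_imp_C4_pattern:
  assumes "T q p \<longleftrightarrow> \<not> T p q" "T r p \<longleftrightarrow> \<not> T p r" "T s p \<longleftrightarrow> \<not> T p s"
    "T r q \<longleftrightarrow> \<not> T q r" "T s q \<longleftrightarrow> \<not> T q s" "T s r \<longleftrightarrow> \<not> T r s"
    and "cyclic_triangles T p q r s = 2"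
  shows "\<exists>a\<in>{p, q, r, s}. \<exists>b\<in>{p, q, r, s}. \<exists>c\<in>{p, q, r, s}. \<exists>d\<in>{p, q, r, s}.
           C4_pattern T a b c d"
  using assms(7) unfolding cyclic_triangles_def C4_pattern_def cyclic_def
  by (cases "T p q"; cases "T p r"; cases "T p s"; cases "T q r"; cases "T q s"; cases "T r s";
      simp add: assms(1-6); blast)

lemma cyclic_triangles_eq_2_imp_spans_C4:
  assumes tour: "tournament n T" and "p < n" "q < n" "r < n" "s < n" "distinct [p, q, r, s]"
    and "cyclic_triangles T p q r s = 2"
  shows "spans_iso 4 C4 T {p, q, r, s}"
proof -
  from cyclic_triangles_eq_2_imp_C4_pattern[OF tournament_converse4[OF assms(1-6)] assms(7)]
  obtain a b c d where abcd: "a \<in> {p, q, r, s}" "b \<in> {p, q, r, s}" "c \<in> {p, q, r, s}"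
      "d \<in> {p, q, r, s}" and pattern: "C4_pattern T a b c d"
    by blast
  have "a < n" "b < n" "c < n" "d < n"
    using abcd assms(2-5) by auto
  then have "spans_iso 4 C4 T {a, b, c, d}"
    by (rule C4_pattern_spans[OF tour _ _ _ _ pattern])
  moreover have "distinct [a, b, c, d]"
    using pattern \<open>a < n\<close> \<open>b < n\<close> \<open>c < n\<close> \<open>d < n\<close> tour
    unfolding C4_pattern_def tournament_def by auto
  then have "{a, b, c, d} = {p, q, r, s}"
    using abcd assms(6) by (intro card_subset_eq) auto
  ultimately show ?thesis
    by simp
qed

lemma copies_C4_C3_inequality:
  assumes tour: "tournament n T"
  shows "40 * real (n - 3) * real (copies 3 C3 n T)
           \<le> 128 * real (copies 4 C4 n T) + 4 * real (n choose 4) + 25 * real n ^ 3"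
proof -
  define A4 where "A4 = {S. S \<subseteq> {0..<n} \<and> card S = 4 \<and> spans_iso 4 C4 T S}"
  define A3 where "A3 = {S. S \<subseteq> {0..<n} \<and> card S = 3 \<and> spans_iso 3 C3 T S}"
  define strong where "strong = sum4 n (\<lambda>p q r s.
    of_bool (distinct [p, q, r, s]) * of_bool (cyclic_triangles T p q r s = 2))"
  define incidences where "incidences = sum4 n (\<lambda>p q r s.
    of_bool (distinct [p, q, r, s]) * cyclic_triangles T p q r s)"
  define cyclic3 where "cyclic3 = sum3 n (\<lambda>p q r.
    of_bool (distinct [p, q, r]) * of_bool (cyclic T p q r))"
  have "24 * sum4 n (sos_term T) = sum4 n (\<lambda>p q r s.
      128 * (of_bool (distinct [p, q, r, s]) * of_bool (cyclic_triangles T p q r s = 2))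
      - 40 * (of_bool (distinct [p, q, r, s]) * cyclic_triangles T p q r s)
      + 4 * of_bool (distinct [p, q, r, s]))"
    unfolding sum4_symmetrize[symmetric]
    by (intro sum4_cong) (simp add: symmetrize_sos_term[OF tour] algebra_simps)
  also have "\<dots> = 128 * strong - 40 * incidences + 96 * real (n choose 4)"
    unfolding strong_def incidences_def by (simp only: sum4_add sum4_diff sum4_mult sum4_distinct)
  finally have sos: "- 600 * real n ^ 3 \<le> 128 * strong - 40 * incidences + 96 * real (n choose 4)"
    using sum4_sos_term_ge[of n T] by linarith
  have "strong \<le> sum4 n (\<lambda>p q r s. of_bool (distinct [p, q, r, s] \<and> {p, q, r, s} \<in> A4))"
    unfolding strong_def A4_def
    by (intro sum4_mono) (auto simp: card_insert_if cyclic_triangles_eq_2_imp_spans_C4[OF tour])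
  also have "\<dots> = 24 * real (copies 4 C4 n T)"
    unfolding A4_def copies_def by (rule sum4_distinct_family) auto
  finally have strong_le: "strong \<le> 24 * real (copies 4 C4 n T)" .
  have "6 * real (copies 3 C3 n T) = sum3 n (\<lambda>p q r. of_bool (distinct [p, q, r] \<and> {p, q, r} \<in> A3))"
    unfolding A3_def copies_def by (rule sum3_distinct_family[symmetric]) auto
  also have "\<dots> \<le> cyclic3"
    unfolding cyclic3_def A3_def by (intro sum3_mono) (auto simp: spans_C3_imp_cyclic)
  finally have "real (n - 3) * (6 * real (copies 3 C3 n T)) \<le> real (n - 3) * cyclic3"
    by (rule mult_left_mono) simp
  moreover have "incidences = 4 * real (n - 3) * cyclic3"
    unfolding incidences_def cyclic3_def by (rule sum4_cyclic_triangles)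
  ultimately show ?thesis
    using sos strong_le by (simp add: algebra_simps)
qed

lemma C4_density_lower_bound:
  assumes "tournament n T" "4 \<le> n"
  shows "160 * pr 3 C3 n T - 4 - 6400 / real n \<le> 128 * pr 4 C4 n T"
proof -
  define B where "B = real (n choose 4)"
  have "(real n / 4) ^ 4 \<le> B"
    unfolding B_def using binomial_ge_n_over_k_pow_k[OF assms(2)] by simp
  moreover have "0 < real n"
    using assms(2) by simp
  ultimately have "0 < B" and error: "25 * real n ^ 3 \<le> B * (6400 / real n)"
    by (auto simp: field_simps power3_eq_cube power4_eq_xxxx intro: less_le_trans[of 0 "(real n / 4) ^ 4"])
  have "real (n - 3) * real (n choose 3) = 4 * B"
    unfolding B_def by (rule choose_3_mult_eq_choose_4)
  moreover have "0 < real (n - 3)"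
    using assms(2) by simp
  ultimately have "pr 3 C3 n T = real (n - 3) * real (copies 3 C3 n T) / (4 * B)"
    unfolding pr_eq_copies by (metis mult_divide_mult_cancel_left_if less_irrefl)
  with \<open>0 < B\<close> have "B * (160 * pr 3 C3 n T) = 40 * real (n - 3) * real (copies 3 C3 n T)"
    by simp
  moreover have "B * (128 * pr 4 C4 n T) = 128 * real (copies 4 C4 n T)"
    using \<open>0 < B\<close> unfolding pr_eq_copies B_def by simp
  ultimately have "B * (160 * pr 3 C3 n T - 4 - 6400 / real n) \<le> B * (128 * pr 4 C4 n T)"
    using copies_C4_C3_inequality[OF assms(1)] error unfolding B_def right_diff_distrib by linarith
  with \<open>0 < B\<close> show ?thesis
    by simp
qed

theorem corollary2p6:
  fixes N :: "nat \<Rightarrow> nat" and T :: "nat \<Rightarrow> nat \<Rightarrow> nat \<Rightarrow> bool"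
    and c3 c4 :: real
  assumes tour: "\<And>m. tournament (N m) (T m)"
    and size: "filterlim N at_top sequentially"
    and lim3: "(\<lambda>m. pr 3 C3 (N m) (T m)) \<longlonglongrightarrow> c3"
    and lim4: "(\<lambda>m. pr 4 C4 (N m) (T m)) \<longlonglongrightarrow> c4"
    and c3_ge: "c3 \<ge> 1 / 16"
  shows "c4 \<ge> 3 / 64"
proof -
  have "(\<lambda>m. 6400 / real (N m)) \<longlonglongrightarrow> 0"
    using filterlim_compose[OF filterlim_real_sequentially size]
    by (intro tendsto_divide_0[OF tendsto_const] filterlim_at_top_imp_at_infinity)
  then have "(\<lambda>m. 128 * pr 4 C4 (N m) (T m) - (160 * pr 3 C3 (N m) (T m) - 4 - 6400 / real (N m)))
      \<longlonglongrightarrow> 128 * c4 - (160 * c3 - 4 - 0)"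
    by (intro tendsto_intros lim3 lim4)
  moreover have "eventually (\<lambda>m. 4 \<le> N m) sequentially"
    using size by (simp add: filterlim_at_top)
  then have "eventually (\<lambda>m. 0 \<le> 128 * pr 4 C4 (N m) (T m)
      - (160 * pr 3 C3 (N m) (T m) - 4 - 6400 / real (N m))) sequentially"
    by eventually_elim (use C4_density_lower_bound[OF tour] in simp)
  ultimately have "0 \<le> 128 * c4 - (160 * c3 - 4 - 0)"
    by (rule tendsto_lowerbound) simp
  with c3_ge show ?thesis
    by linarith
qed

end
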